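(* Let $\mathcal X\subseteq\mathbb R^n$, $\bm c\in\mathbb R^n$, $\varepsilon\in(0,1)$, scenarios $\bm\xi^1,\dots,\bm\xi^N$ with probabilities $p_1,\dots,p_N\ge0$, $\sum_ip_i=1$, and $g(\bm x,\bm\xi)=\max_{j\in[J]}g_j(\bm x,\bm\xi)$. Consider $$v^*=\min_{\bm x\in\mathcal X}\Big\{\bm c^\top\bm x:\ \sum_{i=1}^N p_i\,\mathbb I[g(\bm x,\bm\xi^i)\le 0]\ge 1-\varepsilon\Big\},$$ let $\bm x^*$ be an optimal solution, $\bar I^*=\{i\in[N]: g(\bm x^*,\bm\xi^i)\le0\}$ and $\bar{\mathcal X}^*=\{\bm x\in\mathcal X: g(\bm x,\bm\xi^i)\le 0,\ i\in\bar I^*\}$. Suppose $\mathcal X$ is convex and $g(\cdot,\bm\xi^i)$ is convex for every $i\in\bar I^*$. If there exists $\bar I\subseteq\bar I^*$ such that (i) for each $i\in\bar I$ there exists $\bm x^i\in\bar{\mathcal X}^*$ with $g(\bm x^i,\bm\xi^i)<0$, and (ii) $\sum_{i\in\bar I}p_i>1-\varepsilon$, then $v^*=v^{\mathrm{CVaR}}_S$.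
   Context: $\mathbb I[\cdot]$ is the indicator function, $\bm e$ the all-ones vector. For $\bm\alpha\ge\bm e$, $v^{\mathrm{CVaR}}(\bm\alpha)=\min_{\bm x\in\mathcal X,\beta\le0,\bm s\ge\bm0}\{\bm c^\top\bm x:\ \varepsilon\beta+\sum_i p_is_i\le0,\ s_i+\beta\ge\alpha_i g(\bm x,\bm\xi^i),\ i\in[N]\}$ (value $+\infty$ if infeasible), and $v^{\mathrm{CVaR}}_S=\inf_{\bm\alpha\ge\bm e}v^{\mathrm{CVaR}}(\bm\alpha)$. *)

theory Defs
  imports "HOL-Analysis.Analysis"
begin

text \<open>Scenarios are indexed by [N] = {1..N}; decision vectors live in real^'n.
  Optimal values are taken as infima in the extended reals (Inf of the empty set is +infinity).\<close>

definition chance_feasible ::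
  "(real^'n) set \<Rightarrow> nat \<Rightarrow> (nat \<Rightarrow> real) \<Rightarrow> (nat \<Rightarrow> 'b) \<Rightarrow> (real^'n \<Rightarrow> 'b \<Rightarrow> real) \<Rightarrow> real \<Rightarrow> real^'n \<Rightarrow> bool"
  where "chance_feasible X N p \<xi> g \<epsilon> x \<longleftrightarrow>
    x \<in> X \<and> (\<Sum>i=1..N. p i * (if g x (\<xi> i) \<le> 0 then 1 else 0)) \<ge> 1 - \<epsilon>"

definition v_star ::
  "(real^'n) set \<Rightarrow> real^'n \<Rightarrow> nat \<Rightarrow> (nat \<Rightarrow> real) \<Rightarrow> (nat \<Rightarrow> 'b) \<Rightarrow> (real^'n \<Rightarrow> 'b \<Rightarrow> real) \<Rightarrow> real \<Rightarrow> ereal"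
  where "v_star X c N p \<xi> g \<epsilon> =
    Inf {ereal (c \<bullet> x) | x. chance_feasible X N p \<xi> g \<epsilon> x}"

definition v_CVaR ::
  "(real^'n) set \<Rightarrow> real^'n \<Rightarrow> nat \<Rightarrow> (nat \<Rightarrow> real) \<Rightarrow> (nat \<Rightarrow> 'b) \<Rightarrow> (real^'n \<Rightarrow> 'b \<Rightarrow> real) \<Rightarrow> real \<Rightarrow> (nat \<Rightarrow> real) \<Rightarrow> ereal"
  where "v_CVaR X c N p \<xi> g \<epsilon> \<alpha> =
    Inf {ereal (c \<bullet> x) | x \<beta> s. x \<in> X \<and> \<beta> \<le> 0 \<and> (\<forall>i\<in>{1..N}. s i \<ge> 0) \<and>
       \<epsilon> * \<beta> + (\<Sum>i=1..N. p i * s i) \<le> 0 \<and>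
       (\<forall>i\<in>{1..N}. s i + \<beta> \<ge> \<alpha> i * g x (\<xi> i))}"

definition v_CVaR_S ::
  "(real^'n) set \<Rightarrow> real^'n \<Rightarrow> nat \<Rightarrow> (nat \<Rightarrow> real) \<Rightarrow> (nat \<Rightarrow> 'b) \<Rightarrow> (real^'n \<Rightarrow> 'b \<Rightarrow> real) \<Rightarrow> real \<Rightarrow> ereal"
  where "v_CVaR_S X c N p \<xi> g \<epsilon> =
    (INF \<alpha>\<in>{\<alpha>. \<forall>i\<in>{1..N}. \<alpha> i \<ge> 1}. v_CVaR X c N p \<xi> g \<epsilon> \<alpha>)"

end

theory Submission
  imports Defs
begin

(* For \<alpha> \<ge> 1 the CVaR constraints force s\<^sub>i > -\<beta> \<ge> 0 on every violated scenario, so the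
  budget \<epsilon>\<beta> + \<Sum> p\<^sub>i s\<^sub>i \<le> 0 caps the violated mass by \<epsilon>: the CVaR problem is a restriction
  of the chance-constrained one and v* \<le> v_CVaR_S.  Conversely, a point of X that is strictly
  feasible on a scenario set of mass > 1 - \<epsilon> is CVaR-feasible once \<alpha> is large on that set.
  Averaging the Slater points x\<^sup>i yields such a point x' for the set Ibar; by convexity so does
  every point of the segment (x*, x'], and letting it tend to x* gives v_CVaR_S \<le> c \<bullet> x* = v*. *)

lemma violation_mass_le_of_cvar_constraint:
  fixes p s v \<alpha> :: "'i \<Rightarrow> real"
  assumes A: "finite A" and eps: "0 < \<epsilon>" and beta: "\<beta> \<le> 0"
    and p: "\<And>i. i \<in> A \<Longrightarrow> 0 \<le> p i" and s: "\<And>i. i \<in> A \<Longrightarrow> 0 \<le> s i"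
    and budget: "\<epsilon> * \<beta> + (\<Sum>i\<in>A. p i * s i) \<le> 0"
    and dominate: "\<And>i. i \<in> A \<Longrightarrow> \<alpha> i * v i \<le> s i + \<beta>"
    and alpha: "\<And>i. i \<in> A \<Longrightarrow> 1 \<le> \<alpha> i"
  shows "(\<Sum>i\<in>{i\<in>A. 0 < v i}. p i) \<le> \<epsilon>"
proof -
  let ?V = "{i\<in>A. 0 < v i}"
  have s_exceeds: "- \<beta> < s i" if "i \<in> ?V" for i
  proof -
    have "0 < \<alpha> i * v i"
      using that alpha[of i] by (intro mult_pos_pos) auto
    then show ?thesis using dominate[of i] that by auto
  qed
  have "(\<Sum>i\<in>?V. p i * s i) \<le> (\<Sum>i\<in>A. p i * s i)"
    by (rule sum_mono2) (use A p s in auto)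
  with budget have V_budget: "(\<Sum>i\<in>?V. p i * s i) \<le> - \<epsilon> * \<beta>"
    by linarith
  show ?thesis
  proof (cases "\<beta> = 0")
    case True
    have terms_nonneg: "\<forall>i\<in>?V. 0 \<le> p i * s i"
      using p s by auto
    then have "(\<Sum>i\<in>?V. p i * s i) = 0"
      using V_budget True by (intro antisym sum_nonneg) auto
    then have "\<forall>i\<in>?V. p i * s i = 0"
      using terms_nonneg A by (subst (asm) sum_nonneg_eq_0_iff) auto
    then have "\<forall>i\<in>?V. p i = 0"
      using s_exceeds True by force
    then show ?thesis
      using eps by simp
  next
    case False
    have "(\<Sum>i\<in>?V. p i * (- \<beta>)) \<le> (\<Sum>i\<in>?V. p i * s i)"
    proof (rule sum_mono)
      fix i assume "i \<in> ?V"
      then show "p i * (- \<beta>) \<le> p i * s i"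
        using p s_exceeds by (intro mult_left_mono) (auto simp: less_imp_le)
    qed
    with V_budget have "(\<Sum>i\<in>?V. p i) * (- \<beta>) \<le> \<epsilon> * (- \<beta>)"
      unfolding sum_distrib_right by linarith
    then show ?thesis using False beta by simp
  qed
qed

lemma cvar_feasible_imp_chance_feasible:
  assumes eps: "0 < \<epsilon>"
    and p_nonneg: "\<forall>i\<in>{1..N}. 0 \<le> p i" and p_sum: "(\<Sum>i=1..N. p i) = 1"
    and x: "x \<in> X" and beta: "\<beta> \<le> 0" and s: "\<forall>i\<in>{1..N}. 0 \<le> s i"
    and budget: "\<epsilon> * \<beta> + (\<Sum>i=1..N. p i * s i) \<le> 0"
    and dominate: "\<forall>i\<in>{1..N}. \<alpha> i * g x (\<xi> i) \<le> s i + \<beta>"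
    and alpha: "\<forall>i\<in>{1..N}. 1 \<le> \<alpha> i"
  shows "chance_feasible X N p \<xi> g \<epsilon> x"
proof -
  let ?V = "{i\<in>{1..N}. 0 < g x (\<xi> i)}"
  have "(\<Sum>i\<in>?V. p i) \<le> \<epsilon>"
    by (rule violation_mass_le_of_cvar_constraint[where s = s and \<alpha> = \<alpha> and \<beta> = \<beta>])
      (use eps beta p_nonneg s budget dominate alpha in auto)
  moreover have "(\<Sum>i=1..N. p i * (if g x (\<xi> i) \<le> 0 then 1 else 0)) = 1 - (\<Sum>i\<in>?V. p i)"
  proof -
    have "(\<Sum>i=1..N. p i * (if g x (\<xi> i) \<le> 0 then 1 else 0))
        = (\<Sum>i=1..N. p i - (if 0 < g x (\<xi> i) then p i else 0))"
      by (rule sum.cong) auto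
    also have "\<dots> = 1 - (\<Sum>i\<in>?V. p i)"
      by (simp only: sum_subtractf p_sum sum.inter_filter[OF finite_atLeastAtMost])
    finally show ?thesis .
  qed
  ultimately show ?thesis
    using x by (simp add: chance_feasible_def)
qed

lemma v_star_le_v_CVaR:
  assumes "0 < \<epsilon>" "\<forall>i\<in>{1..N}. 0 \<le> p i" "(\<Sum>i=1..N. p i) = 1"
    and "\<forall>i\<in>{1..N}. 1 \<le> \<alpha> i"
  shows "v_star X c N p \<xi> g \<epsilon> \<le> v_CVaR X c N p \<xi> g \<epsilon> \<alpha>"
  unfolding v_star_def v_CVaR_def
proof (rule Inf_superset_mono, safe)
  fix x \<beta> s
  assume "x \<in> X" "\<beta> \<le> 0" "\<forall>i\<in>{1..N}. 0 \<le> s i"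
    "\<epsilon> * \<beta> + (\<Sum>i=1..N. p i * s i) \<le> 0" "\<forall>i\<in>{1..N}. \<alpha> i * g x (\<xi> i) \<le> s i + \<beta>"
  then have "chance_feasible X N p \<xi> g \<epsilon> x"
    using assms by (intro cvar_feasible_imp_chance_feasible[where \<beta> = \<beta> and s = s and \<alpha> = \<alpha>])
  then show "\<exists>y. ereal (c \<bullet> x) = ereal (c \<bullet> y) \<and> chance_feasible X N p \<xi> g \<epsilon> y"
    by blast
qed

lemma v_star_le_v_CVaR_S:
  assumes "0 < \<epsilon>" "\<forall>i\<in>{1..N}. 0 \<le> p i" "(\<Sum>i=1..N. p i) = 1"
  shows "v_star X c N p \<xi> g \<epsilon> \<le> v_CVaR_S X c N p \<xi> g \<epsilon>"
  unfolding v_CVaR_S_def by (rule INF_greatest) (use assms v_star_le_v_CVaR in blast)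

lemma v_star_eq_optimal_value:
  assumes "chance_feasible X N p \<xi> g \<epsilon> x"
    and "\<forall>y. chance_feasible X N p \<xi> g \<epsilon> y \<longrightarrow> c \<bullet> x \<le> c \<bullet> y"
  shows "v_star X c N p \<xi> g \<epsilon> = ereal (c \<bullet> x)"
  unfolding v_star_def by (rule Inf_eqI) (use assms in auto)

lemma v_CVaR_S_le_strictly_feasible:
  assumes p_nonneg: "\<forall>i\<in>{1..N}. 0 \<le> p i"
    and I: "I \<subseteq> {1..N}" and tail: "(\<Sum>i\<in>{1..N} - I. p i) < \<epsilon>"
    and y: "y \<in> X" and strict: "\<forall>i\<in>I. g y (\<xi> i) < 0"
  shows "v_CVaR_S X c N p \<xi> g \<epsilon> \<le> ereal (c \<bullet> y)"
proof -
  (* With \<beta> = -M, the scaling \<alpha>\<^sub>i = M / -g\<^sub>i puts the scenarios of I below the threshold for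
    free, the others pay |g\<^sub>i| + M, and M is chosen to make the budget tight. *)
  let ?J = "{1..N} - I"
  define G where "G = (\<Sum>i\<in>?J. p i * \<bar>g y (\<xi> i)\<bar>)"
  define M where "M = G / (\<epsilon> - (\<Sum>i\<in>?J. p i))"
  define s where "s i = (if i \<in> I then 0 else \<bar>g y (\<xi> i)\<bar> + M)" for i
  define \<alpha> where "\<alpha> i = (if i \<in> I then max 1 (M / - g y (\<xi> i)) else 1)" for i
  have "0 \<le> G"
    using p_nonneg by (auto simp: G_def intro!: sum_nonneg)
  then have M_nonneg: "0 \<le> M"
    using tail by (simp add: M_def)
  have "(\<Sum>i=1..N. p i * s i) = (\<Sum>i\<in>?J. p i * s i) + (\<Sum>i\<in>I. p i * s i)"
    using I by (simp add: sum.subset_diff)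
  also have "\<dots> = G + M * (\<Sum>i\<in>?J. p i)"
    by (simp add: s_def G_def distrib_left sum.distrib sum_distrib_left mult.commute)
  also have "\<dots> = \<epsilon> * M"
    using tail by (simp add: M_def field_simps)
  finally have budget: "\<epsilon> * (- M) + (\<Sum>i=1..N. p i * s i) \<le> 0"
    by simp
  have dominate: "\<alpha> i * g y (\<xi> i) \<le> s i + - M" for i
  proof (cases "i \<in> I")
    case True
    then have g_neg: "g y (\<xi> i) < 0"
      using strict by blast
    have "\<alpha> i * g y (\<xi> i) \<le> M / - g y (\<xi> i) * g y (\<xi> i)"
      using True g_neg by (intro mult_right_mono_neg) (auto simp: \<alpha>_def)
    also have "\<dots> = - M"
      using g_neg by simp
    finally show ?thesis
      using True by (simp add: s_def)
  next
    case False
    then show ?thesis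
      by (simp add: s_def \<alpha>_def)
  qed
  have "v_CVaR X c N p \<xi> g \<epsilon> \<alpha> \<le> ereal (c \<bullet> y)"
    unfolding v_CVaR_def
  proof (rule Inf_lower)
    have "- M \<le> 0" "\<forall>i\<in>{1..N}. 0 \<le> s i"
      using M_nonneg by (simp_all add: s_def)
    then show "ereal (c \<bullet> y) \<in> {ereal (c \<bullet> x) | x \<beta> s. x \<in> X \<and> \<beta> \<le> 0 \<and> (\<forall>i\<in>{1..N}. 0 \<le> s i) \<and>
       \<epsilon> * \<beta> + (\<Sum>i=1..N. p i * s i) \<le> 0 \<and> (\<forall>i\<in>{1..N}. \<alpha> i * g x (\<xi> i) \<le> s i + \<beta>)}"
      using y budget dominate by blast
  qed
  moreover have "v_CVaR_S X c N p \<xi> g \<epsilon> \<le> v_CVaR X c N p \<xi> g \<epsilon> \<alpha>"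
    unfolding v_CVaR_S_def by (rule INF_lower) (simp add: \<alpha>_def)
  ultimately show ?thesis
    by simp
qed

lemma convex_on_common_negative_point:
  fixes f :: "'i \<Rightarrow> 'a::real_vector \<Rightarrow> real" and x :: "'i \<Rightarrow> 'a"
  assumes I: "finite I" "I \<noteq> {}" and S: "convex S"
    and f: "\<And>i. i \<in> I \<Longrightarrow> convex_on S (f i)"
    and x: "\<And>k. k \<in> I \<Longrightarrow> x k \<in> S"
    and nonpos: "\<And>i k. i \<in> I \<Longrightarrow> k \<in> I \<Longrightarrow> f i (x k) \<le> 0"
    and neg: "\<And>i. i \<in> I \<Longrightarrow> f i (x i) < 0"
  obtains z where "z \<in> S" "\<And>i. i \<in> I \<Longrightarrow> f i z < 0"
proof -
  define w where "w = 1 / real (card I)"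
  define z where "z = (\<Sum>k\<in>I. w *\<^sub>R x k)"
  have w_pos: "0 < w" and w_sum: "(\<Sum>k\<in>I. w) = 1"
    using I by (simp_all add: w_def card_gt_0_iff)
  have "z \<in> S"
    unfolding z_def by (rule convex_sum[OF I(1) S w_sum]) (use w_pos x in auto)
  moreover have "f i z < 0" if i: "i \<in> I" for i
  proof -
    have "f i z \<le> (\<Sum>k\<in>I. w * f i (x k))"
      unfolding z_def by (rule convex_on_sum[OF I f[OF i] w_sum]) (use w_pos x in auto)
    also have "\<dots> = w * f i (x i) + (\<Sum>k\<in>I - {i}. w * f i (x k))"
      using I i by (simp add: sum.remove)
    also have "\<dots> < 0"
    proof -
      have "(\<Sum>k\<in>I - {i}. w * f i (x k)) \<le> 0"
        using w_pos nonpos i by (intro sum_nonpos) (simp add: mult_nonneg_nonpos)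
      moreover have "w * f i (x i) < 0"
        using w_pos neg[OF i] by (simp add: mult_pos_neg)
      ultimately show ?thesis
        by linarith
    qed
    finally show ?thesis .
  qed
  ultimately show thesis
    using that by blast
qed

lemma convex_on_segment_negative:
  assumes f: "convex_on S f" and ab: "a \<in> S" "b \<in> S"
    and "f a \<le> 0" "f b < 0" and l: "0 < l" "l \<le> 1"
  shows "f ((1 - l) *\<^sub>R a + l *\<^sub>R b) < 0"
proof -
  have "f ((1 - l) *\<^sub>R a + l *\<^sub>R b) \<le> (1 - l) * f a + l * f b"
    using l ab by (intro convex_onD[OF f]) auto
  moreover have "(1 - l) * f a \<le> 0" "l * f b < 0"
    using assms by (simp_all add: mult_nonneg_nonpos mult_pos_neg)
  ultimately show ?thesis
    by linarith
qed

lemma ereal_le_inner_of_le_segment: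
  fixes v :: ereal and a b c :: "'a::real_inner"
  assumes "\<And>l. 0 < l \<Longrightarrow> l \<le> 1 \<Longrightarrow> v \<le> ereal (c \<bullet> ((1 - l) *\<^sub>R a + l *\<^sub>R b))"
  shows "v \<le> ereal (c \<bullet> a)"
proof (rule tendsto_lowerbound)
  have "((\<lambda>l. c \<bullet> ((1 - l) *\<^sub>R a + l *\<^sub>R b)) \<longlongrightarrow> c \<bullet> ((1 - 0) *\<^sub>R a + 0 *\<^sub>R b)) (at_right 0)"
    by (intro tendsto_intros)
  then show "((\<lambda>l. ereal (c \<bullet> ((1 - l) *\<^sub>R a + l *\<^sub>R b))) \<longlongrightarrow> ereal (c \<bullet> a)) (at_right 0)"
    by (simp add: lim_ereal)
  show "\<forall>\<^sub>F l in at_right 0. v \<le> ereal (c \<bullet> ((1 - l) *\<^sub>R a + l *\<^sub>R b))"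
    by (rule eventually_at_rightI[of 0 1]) (auto intro: assms)
qed simp

theorem theorem2:
  fixes X :: "(real^'n) set" and c :: "real^'n" and \<epsilon> :: real
    and N J :: nat and p :: "nat \<Rightarrow> real" and \<xi> :: "nat \<Rightarrow> 'b"
    and gj :: "nat \<Rightarrow> real^'n \<Rightarrow> 'b \<Rightarrow> real" and g :: "real^'n \<Rightarrow> 'b \<Rightarrow> real"
    and xstar :: "real^'n" and Ibar :: "nat set"
  assumes eps: "0 < \<epsilon>" "\<epsilon> < 1"
    and p_nonneg: "\<forall>i\<in>{1..N}. p i \<ge> 0"
    and p_sum: "(\<Sum>i=1..N. p i) = 1"
    and J_pos: "J \<ge> 1"
    and g_def: "\<forall>x \<xi>'. g x \<xi>' = Max ((\<lambda>j. gj j x \<xi>') ` {1..J})"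
    and xstar_feas: "chance_feasible X N p \<xi> g \<epsilon> xstar"
    and xstar_opt: "\<forall>x. chance_feasible X N p \<xi> g \<epsilon> x \<longrightarrow> c \<bullet> xstar \<le> c \<bullet> x"
    and X_convex: "convex X"
    and g_convex: "\<forall>i\<in>{i\<in>{1..N}. g xstar (\<xi> i) \<le> 0}. convex_on UNIV (\<lambda>x. g x (\<xi> i))"
    and Ibar_sub: "Ibar \<subseteq> {i\<in>{1..N}. g xstar (\<xi> i) \<le> 0}"
    and slater: "\<forall>i\<in>Ibar. \<exists>xi. xi \<in> {x\<in>X. \<forall>k\<in>{i\<in>{1..N}. g xstar (\<xi> i) \<le> 0}. g x (\<xi> k) \<le> 0}
                                  \<and> g xi (\<xi> i) < 0"
    and Ibar_mass: "(\<Sum>i\<in>Ibar. p i) > 1 - \<epsilon>"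
  shows "v_star X c N p \<xi> g \<epsilon> = v_CVaR_S X c N p \<xi> g \<epsilon>"
proof -
  let ?Is = "{i\<in>{1..N}. g xstar (\<xi> i) \<le> 0}"
  have xstar_X: "xstar \<in> X"
    using xstar_feas by (simp add: chance_feasible_def)
  have Ibar_Is: "Ibar \<subseteq> ?Is" and Ibar_N: "Ibar \<subseteq> {1..N}"
    using Ibar_sub by auto
  have g_convex_X: "convex_on X (\<lambda>x. g x (\<xi> i))" if "i \<in> Ibar" for i
    using g_convex Ibar_Is that X_convex by (blast intro: convex_on_subset)
  obtain xs where xs: "\<forall>i\<in>Ibar. xs i \<in> X \<and> (\<forall>k\<in>?Is. g (xs i) (\<xi> k) \<le> 0) \<and> g (xs i) (\<xi> i) < 0"
    using bchoice[OF slater] by auto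
  have "finite Ibar" "Ibar \<noteq> {}"
    using finite_subset[OF Ibar_N] Ibar_mass eps(2) by auto
  then obtain xbar where xbar: "xbar \<in> X" "\<And>i. i \<in> Ibar \<Longrightarrow> g xbar (\<xi> i) < 0"
    by (rule convex_on_common_negative_point[of Ibar X "\<lambda>i x. g x (\<xi> i)" xs])
      (use X_convex g_convex_X xs Ibar_Is in auto)
  have tail: "(\<Sum>i\<in>{1..N} - Ibar. p i) < \<epsilon>"
    using Ibar_mass p_sum Ibar_N by (simp add: sum_diff)
  have "v_CVaR_S X c N p \<xi> g \<epsilon> \<le> ereal (c \<bullet> ((1 - l) *\<^sub>R xstar + l *\<^sub>R xbar))"
    if l: "0 < l" "l \<le> 1" for l
  proof (rule v_CVaR_S_le_strictly_feasible[OF p_nonneg Ibar_N tail])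
    show "(1 - l) *\<^sub>R xstar + l *\<^sub>R xbar \<in> X"
      using l by (intro convexD[OF X_convex xstar_X xbar(1)]) auto
    show "\<forall>i\<in>Ibar. g ((1 - l) *\<^sub>R xstar + l *\<^sub>R xbar) (\<xi> i) < 0"
    proof
      fix i assume i: "i \<in> Ibar"
      show "g ((1 - l) *\<^sub>R xstar + l *\<^sub>R xbar) (\<xi> i) < 0"
        using i Ibar_Is
        by (intro convex_on_segment_negative[OF g_convex_X[OF i] xstar_X xbar(1) _ xbar(2)[OF i] l])
          auto
    qed
  qed
  then have "v_CVaR_S X c N p \<xi> g \<epsilon> \<le> ereal (c \<bullet> xstar)"
    by (rule ereal_le_inner_of_le_segment)
  moreover have "v_star X c N p \<xi> g \<epsilon> = ereal (c \<bullet> xstar)"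
    using xstar_feas xstar_opt by (rule v_star_eq_optimal_value)
  moreover have "v_star X c N p \<xi> g \<epsilon> \<le> v_CVaR_S X c N p \<xi> g \<epsilon>"
    using eps(1) p_nonneg p_sum by (rule v_star_le_v_CVaR_S)
  ultimately show ?thesis
    by simp
qed

end
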